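(* Let $M\in(0,1)$ and $\overline{\mathcal B}_M=\{F_{M,V}:V\in[0,D(M)]\}$. Then $\overline{\mathcal B}_M$ is totally ordered by $\preceq_{\text{ssd}}$, with maximum $F_{M,0}$ and minimum $F_{M,D(M)}$; more precisely, for all $0<V_1<V_2<D(M)$, $F_{M,D(M)}\preceq_{\text{ssd}}F_{M,V_2}\preceq_{\text{ssd}}F_{M,V_1}\preceq_{\text{ssd}}F_{M,0}$. Moreover $F_{M,0}=\sup\{F_{M,V}:0<V<D(M)\}$ and $F_{M,D(M)}=\inf\{F_{M,V}:0<V<D(M)\}$ for $\preceq_{\text{ssd}}$.
   Context: $D(M)=M-M^2$. For $0<V<D(M)$, $F_{M,V}$ is the distribution function of the Beta$(\alpha,\beta)$ law with $\alpha=\frac{M(M-M^2-V)}{V}$, $\beta=\frac{(1-M)(M-M^2-V)}{V}$ (mean $M$, variance $V$). Boundary laws: $F_{M,0}(x)=0$ for $x<M$ and $=1$ for $x\ge M$ (Dirac mass at $M$); $F_{M,D(M)}(x)=1-M$ for $0\le x<1$ and $F_{M,D(M)}(1)=1$ (the law $(1-M)\delta_0+M\delta_1$). $F_1\preceq_{\text{ssd}}F_2$ means $\int_0^xF_2(t)dt\le\int_0^xF_1(t)dt$ for all $x\in[0,1]$. *)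

theory Defs
  imports "HOL-Analysis.Analysis"
begin

definition D :: "real \<Rightarrow> real" where
  "D M = M - M^2"

definition beta_alpha :: "real \<Rightarrow> real \<Rightarrow> real" where
  "beta_alpha M V = M * (M - M^2 - V) / V"

definition beta_beta :: "real \<Rightarrow> real \<Rightarrow> real" where
  "beta_beta M V = (1 - M) * (M - M^2 - V) / V"

definition beta_cdf :: "real \<Rightarrow> real \<Rightarrow> real \<Rightarrow> real" where
  "beta_cdf a b x =
     (if x < 0 then 0 else if 1 \<le> x then 1
      else integral {0..x} (\<lambda>t. t powr (a - 1) * (1 - t) powr (b - 1)) / Beta a b)"

text \<open>F_{M,V}: Dirac at M for V = 0, (1-M)delta_0 + M delta_1 for V = D M,
  Beta law with mean M and variance V for 0 < V < D M.\<close>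
definition FMV :: "real \<Rightarrow> real \<Rightarrow> real \<Rightarrow> real" where
  "FMV M V x =
     (if V = 0 then (if x < M then 0 else 1)
      else if V = D M then (if x < 0 then 0 else if x < 1 then 1 - M else 1)
      else beta_cdf (beta_alpha M V) (beta_beta M V) x)"

definition ssd :: "(real \<Rightarrow> real) \<Rightarrow> (real \<Rightarrow> real) \<Rightarrow> bool" where
  "ssd F1 F2 \<longleftrightarrow> (\<forall>x\<in>{0..1}. integral {0..x} F2 \<le> integral {0..x} F1)"

definition dist_fun01 :: "(real \<Rightarrow> real) \<Rightarrow> bool" where
  "dist_fun01 H \<longleftrightarrow> mono H \<and> (\<forall>x. continuous (at_right x) H)
     \<and> (\<forall>x<0. H x = 0) \<and> (\<forall>x\<ge>1. H x = 1)"

definition ssd_sup :: "(real \<Rightarrow> real) set \<Rightarrow> (real \<Rightarrow> real) \<Rightarrow> bool" where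
  "ssd_sup S G \<longleftrightarrow> (\<forall>F\<in>S. ssd F G) \<and>
     (\<forall>H. dist_fun01 H \<longrightarrow> (\<forall>F\<in>S. ssd F H) \<longrightarrow> ssd G H)"

definition ssd_inf :: "(real \<Rightarrow> real) set \<Rightarrow> (real \<Rightarrow> real) \<Rightarrow> bool" where
  "ssd_inf S G \<longleftrightarrow> (\<forall>F\<in>S. ssd G F) \<and>
     (\<forall>H. dist_fun01 H \<longrightarrow> (\<forall>F\<in>S. ssd H F) \<longrightarrow> ssd H G)"

end

theory Submission
  imports Defs
begin

(* Write J V x for the integral of F_{M,V} over [0,x]. Then F_{M,V1} is ssd-below F_{M,V2}
   exactly when J V2 <= J V1 on [0,1], and J V x = E (x - X)^+ for X with law F_{M,V}.

   For two Beta laws with the same mean and ordered parameters, the logarithm of the ratio of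
   the densities is convex, so the difference of the distribution functions is first
   nonnegative and then nonpositive. It vanishes at 0 and 1 and, the means being equal, its
   integral over [0,1] is 0; hence its integral over [0,x] is nonnegative. As both Beta
   parameters decrease when V grows, J V x increases with V on ]0, D M[.

   For the boundary laws, bound (x - t)^+ above and below by quadratics in t and integrate:
   only the moments M and M^2 + V enter, and one gets
   max 0 (x - M) <= J V x <= x (1 - M),   J V x <= max 0 (x - M) + e + V / (4 e),
   x (1 - M) - (D M - V) <= J V x.
   The outer bounds are J 0 x and J (D M) x; the other two give J V x -> J 0 x as V -> 0 and
   J V x -> J (D M) x as V -> D M, which yields the supremum and infimum. *)

section \<open>Indefinite integrals and sign changes\<close>

lemma MVT_open_interval:
  fixes f f' :: "real \<Rightarrow> real"
  assumes "a < b" "continuous_on {a..b} f"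
    and "\<And>z. a < z \<Longrightarrow> z < b \<Longrightarrow> (f has_real_derivative f' z) (at z)"
  obtains z where "a < z" "z < b" "f b - f a = (b - a) * f' z"
proof -
  from MVT[OF assms(1,2)] obtain l z where z: "a < z" "z < b" "DERIV f z :> l" "f b - f a = (b - a) * l"
    using assms(3) by (force simp: real_differentiable_def)
  then have "l = f' z" using assms(3) DERIV_unique by blast
  with z that show ?thesis by blast
qed

lemma integral_has_real_derivative_interior:
  fixes f :: "real \<Rightarrow> real"
  assumes "f integrable_on {a..b}" "a < x" "x < b" "isCont f x"
  shows "((\<lambda>y. integral {a..y} f) has_real_derivative f x) (at x)"
proof -
  have "((\<lambda>y. integral {a..y} f) has_vector_derivative f x) (at x within {a..b} - {})"
    by (rule integral_has_vector_derivative_continuous_at)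
       (use assms in \<open>auto intro: continuous_at_imp_continuous_within\<close>)
  moreover have "at x within {a..b} = at x"
    by (rule at_within_interior) (use assms in auto)
  ultimately show ?thesis by (simp add: has_real_derivative_iff_has_vector_derivative)
qed

lemma continuous_on_integral_indefinite_integral:
  "f integrable_on {a..b} \<Longrightarrow> continuous_on {a..b} (\<lambda>y. integral {a..y} (\<lambda>s. integral {a..s} f))"
  for f :: "real \<Rightarrow> real"
  by (rule indefinite_integral_continuous_1[OF integrable_continuous_interval[OF
        indefinite_integral_continuous_1]])

lemma integral_indefinite_integral_has_real_derivative:
  fixes f :: "real \<Rightarrow> real"
  assumes f: "f integrable_on {a..b}" and z: "a < z" "z < b"
  shows "((\<lambda>y. integral {a..y} (\<lambda>s. integral {a..s} f)) has_real_derivative integral {a..z} f) (at z)"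
proof (rule integral_has_real_derivative_interior[OF _ z])
  show "(\<lambda>s. integral {a..s} f) integrable_on {a..b}"
    by (intro integrable_continuous_interval indefinite_integral_continuous_1 f)
  show "isCont (\<lambda>s. integral {a..s} f) z"
    by (rule continuous_on_interior[OF indefinite_integral_continuous_1[OF f]]) (use z in auto)
qed

lemma integral_indefinite_integral:
  fixes w :: "real \<Rightarrow> real"
  assumes w: "w integrable_on {a..b}" "(\<lambda>t. t * w t) integrable_on {a..b}"
    and cont: "\<And>t. a < t \<Longrightarrow> t < b \<Longrightarrow> isCont w t"
    and x: "x \<in> {a..b}"
  shows "integral {a..x} (\<lambda>s. integral {a..s} w) = integral {a..x} (\<lambda>t. (x - t) * w t)"
proof -
  define W where "W s = integral {a..s} w" for s
  define \<Phi> where "\<Phi> y = integral {a..y} W - (y * W y - integral {a..y} (\<lambda>t. t * w t))" for y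
  have W_cont: "continuous_on {a..b} W"
    unfolding W_def by (rule indefinite_integral_continuous_1[OF w(1)])
  have W_deriv: "(W has_real_derivative w y) (at y)" if "a < y" "y < b" for y
    unfolding W_def[abs_def] by (rule integral_has_real_derivative_interior) (use w cont that in auto)
  have "\<Phi> x = \<Phi> a"
  proof (cases "a < b")
    case True
    show ?thesis
    proof (rule DERIV_isconst2[where f = \<Phi>, OF True])
      show "continuous_on {a..b} \<Phi>"
        unfolding \<Phi>_def[abs_def] W_def
        by (intro continuous_on_diff continuous_on_mult continuous_on_id
            indefinite_integral_continuous_1 continuous_on_integral_indefinite_integral w)
    next
      fix y assume y: "a < y" "y < b"
      have "((\<lambda>y. integral {a..y} W) has_real_derivative W y) (at y)"
        unfolding W_def[abs_def] by (rule integral_indefinite_integral_has_real_derivative[OF w(1) y])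
      moreover have "((\<lambda>y. integral {a..y} (\<lambda>t. t * w t)) has_real_derivative y * w y) (at y)"
        by (rule integral_has_real_derivative_interior[OF w(2) y]) (use cont y in \<open>auto intro: continuous_intros\<close>)
      ultimately have "(\<Phi> has_real_derivative W y - (y * w y + 1 * W y - y * w y)) (at y)"
        unfolding \<Phi>_def[abs_def] by (intro DERIV_diff DERIV_mult' DERIV_ident W_deriv y)
      then show "(\<Phi> has_real_derivative 0) (at y)" by simp
    qed (use x in auto)
  next
    case False
    with x have "x = a" by simp
    then show ?thesis by simp
  qed
  then have "integral {a..x} W = x * W x - integral {a..x} (\<lambda>t. t * w t)"
    by (simp add: \<Phi>_def W_def)
  also have "\<dots> = integral {a..x} (\<lambda>t. x * w t - t * w t)"
    using x integrable_on_subinterval[OF w(1), of a x] integrable_on_subinterval[OF w(2), of a x]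
    by (simp add: W_def integral_diff integrable_on_mult_right)
  finally show ?thesis by (simp add: W_def[abs_def] left_diff_distrib)
qed

lemma has_integral_integrated_indefinite_integral:
  fixes w :: "real \<Rightarrow> real"
  assumes w: "w integrable_on {a..b}" "(\<lambda>t. t * w t) integrable_on {a..b}"
    and cont: "\<And>t. a < t \<Longrightarrow> t < b \<Longrightarrow> isCont w t"
    and x: "x \<in> {a..b}"
  shows "((\<lambda>t. max 0 (x - t) * w t) has_integral integral {a..x} (\<lambda>s. integral {a..s} w)) {a..b}"
proof -
  have "(\<lambda>t. x * w t - t * w t) integrable_on {a..x}"
    using x by (intro integrable_diff integrable_on_mult_right integrable_on_subinterval[OF w(1)]
        integrable_on_subinterval[OF w(2)]) auto
  then have "((\<lambda>t. (x - t) * w t) has_integral integral {a..x} (\<lambda>t. (x - t) * w t)) {a..x}"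
    by (simp add: left_diff_distrib has_integral_integral)
  then have left: "((\<lambda>t. max 0 (x - t) * w t) has_integral integral {a..x} (\<lambda>t. (x - t) * w t)) {a..x}"
    by (rule has_integral_eq[rotated]) simp
  have right: "((\<lambda>t. max 0 (x - t) * w t) has_integral 0) {x..b}"
    by (rule has_integral_eq[OF _ has_integral_0]) simp
  show ?thesis
    using has_integral_combine[OF _ _ left right] x integral_indefinite_integral[OF w cont x] by simp
qed

lemma vanishing_ends_stays_nonpos:
  fixes h h' :: "real \<Rightarrow> real"
  assumes cont: "continuous_on {a..b} h" and ends: "h a = 0" "h b = 0"
    and deriv: "\<And>z. a < z \<Longrightarrow> z < b \<Longrightarrow> (h has_real_derivative h' z) (at z)"
    and sign: "\<And>z0 z z1. a < z0 \<Longrightarrow> z0 < z \<Longrightarrow> z < z1 \<Longrightarrow> z1 < b \<Longrightarrow>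
      h' z0 < 0 \<Longrightarrow> h' z1 < 0 \<Longrightarrow> h' z \<le> 0"
    and xy: "a \<le> x" "x < y" "y \<le> b" and neg: "h x < 0"
  shows "h y \<le> 0"
proof (rule ccontr)
  assume pos: "\<not> h y \<le> 0"
  have ax: "a < x" using neg ends xy by (cases "a = x") auto
  have yb: "y < b" using pos ends xy by (cases "y = b") auto
  have mvt: "\<exists>z. c < z \<and> z < d \<and> h d - h c = (d - c) * h' z" if "a \<le> c" "c < d" "d \<le> b" for c d
  proof -
    have "continuous_on {c..d} h" using continuous_on_subset[OF cont] that by auto
    moreover have "(h has_real_derivative h' z) (at z)" if "c < z" "z < d" for z
      using deriv that \<open>a \<le> c\<close> \<open>d \<le> b\<close> by simp
    ultimately show ?thesis using MVT_open_interval[OF \<open>c < d\<close>] by metis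
  qed
  obtain z0 where z0: "a < z0" "z0 < x" "h x - h a = (x - a) * h' z0"
    using mvt[of a x] ax xy by auto
  obtain z where z: "x < z" "z < y" "h y - h x = (y - x) * h' z"
    using mvt[of x y] ax yb xy by auto
  obtain z1 where z1: "y < z1" "z1 < b" "h b - h y = (b - y) * h' z1"
    using mvt[of y b] ax xy yb by auto
  have "(x - a) * h' z0 < 0" "(b - y) * h' z1 < 0" "0 < (y - x) * h' z"
    using z0 z z1 neg pos ends by linarith+
  then have "h' z0 < 0" "h' z1 < 0" "0 < h' z"
    using ax xy yb by (simp_all add: mult_less_0_iff zero_less_mult_iff)
  with sign[of z0 z z1] z0 z z1 show False by linarith
qed

lemma vanishing_ends_nonneg:
  fixes G h :: "real \<Rightarrow> real"
  assumes cont: "continuous_on {a..b} G" and ends: "G a = 0" "G b = 0"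
    and deriv: "\<And>z. a < z \<Longrightarrow> z < b \<Longrightarrow> (G has_real_derivative h z) (at z)"
    and crossing: "\<And>x y. a < x \<Longrightarrow> x < y \<Longrightarrow> y < b \<Longrightarrow> h x < 0 \<Longrightarrow> h y \<le> 0"
    and x: "x \<in> {a..b}"
  shows "0 \<le> G x"
proof (rule ccontr)
  assume neg: "\<not> 0 \<le> G x"
  have ax: "a < x" using neg ends x by (cases "a = x") auto
  have xb: "x < b" using neg ends x by (cases "x = b") auto
  have mvt: "\<exists>z. c < z \<and> z < d \<and> G d - G c = (d - c) * h z" if "a \<le> c" "c < d" "d \<le> b" for c d
  proof -
    have "continuous_on {c..d} G" using continuous_on_subset[OF cont] that by auto
    moreover have "(G has_real_derivative h z) (at z)" if "c < z" "z < d" for z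
      using deriv that \<open>a \<le> c\<close> \<open>d \<le> b\<close> by simp
    ultimately show ?thesis using MVT_open_interval[OF \<open>c < d\<close>] by metis
  qed
  obtain z0 where z0: "a < z0" "z0 < x" "G x - G a = (x - a) * h z0"
    using mvt[of a x] ax xb by auto
  obtain z1 where z1: "x < z1" "z1 < b" "G b - G x = (b - x) * h z1"
    using mvt[of x b] ax xb by auto
  have "(x - a) * h z0 < 0" "0 < (b - x) * h z1"
    using z0 z1 neg ends by linarith+
  then have "h z0 < 0" "0 < h z1"
    using ax xb by (simp_all add: mult_less_0_iff zero_less_mult_iff)
  with crossing[of z0 z1] z0 z1 show False by fastforce
qed

section \<open>Densities on the unit interval\<close>

lemma integral_integral_density_at_1:
  fixes w :: "real \<Rightarrow> real"
  assumes w: "(w has_integral 1) {0..1}" "((\<lambda>t. t * w t) has_integral m) {0..1}"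
    and cont: "\<And>t. 0 < t \<Longrightarrow> t < 1 \<Longrightarrow> isCont w t"
  shows "integral {0..1} (\<lambda>s. integral {0..s} w) = 1 - m"
proof -
  have "((\<lambda>t. max 0 (1 - t) * w t) has_integral integral {0..1} (\<lambda>s. integral {0..s} w)) {0..1}"
    using w by (intro has_integral_integrated_indefinite_integral cont) auto
  moreover have "((\<lambda>t. max 0 (1 - t) * w t) has_integral 1 - m) {0..1}"
    using has_integral_diff[OF w] by (rule has_integral_eq[rotated]) (auto simp: left_diff_distrib)
  ultimately show ?thesis by (rule has_integral_unique)
qed

theorem integrated_cdf_le_of_density_crossing:
  fixes w1 w2 :: "real \<Rightarrow> real"
  assumes mass: "(w1 has_integral 1) {0..1}" "(w2 has_integral 1) {0..1}"
    and mean: "((\<lambda>t. t * w1 t) has_integral m) {0..1}" "((\<lambda>t. t * w2 t) has_integral m) {0..1}"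
    and cont: "\<And>t. 0 < t \<Longrightarrow> t < 1 \<Longrightarrow> isCont w1 t" "\<And>t. 0 < t \<Longrightarrow> t < 1 \<Longrightarrow> isCont w2 t"
    and sign: "\<And>z0 z z1. 0 < z0 \<Longrightarrow> z0 < z \<Longrightarrow> z < z1 \<Longrightarrow> z1 < 1 \<Longrightarrow>
      w1 z0 < w2 z0 \<Longrightarrow> w1 z1 < w2 z1 \<Longrightarrow> w1 z \<le> w2 z"
    and x: "x \<in> {0..1}"
  shows "integral {0..x} (\<lambda>s. integral {0..s} w2) \<le> integral {0..x} (\<lambda>s. integral {0..s} w1)"
proof -
  have int: "w1 integrable_on {0..1}" "w2 integrable_on {0..1}"
    using mass by auto
  define h where "h s = integral {0..s} w1 - integral {0..s} w2" for s
  define G where "G y = integral {0..y} (\<lambda>s. integral {0..s} w1) - integral {0..y} (\<lambda>s. integral {0..s} w2)"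
    for y
  have h_cont: "continuous_on {0..1} h"
    unfolding h_def by (intro continuous_on_diff indefinite_integral_continuous_1 int)
  have h_deriv: "(h has_real_derivative w1 z - w2 z) (at z)" if "0 < z" "z < 1" for z
    unfolding h_def[abs_def]
    by (intro DERIV_diff integral_has_real_derivative_interior[OF int(1) that cont(1)[OF that]]
        integral_has_real_derivative_interior[OF int(2) that cont(2)[OF that]])
  have h_ends: "h 0 = 0" "h 1 = 0"
    using integral_unique[OF mass(1)] integral_unique[OF mass(2)] by (simp_all add: h_def)
  have crossing: "h y \<le> 0" if "0 < x" "x < y" "y < 1" "h x < 0" for x y
    by (rule vanishing_ends_stays_nonpos[OF h_cont h_ends h_deriv _ _ _ _ that(4)])
      (use that sign in auto)
  have G_cont: "continuous_on {0..1} G"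
    unfolding G_def by (intro continuous_on_diff continuous_on_integral_indefinite_integral int)
  have G_deriv: "(G has_real_derivative h z) (at z)" if "0 < z" "z < 1" for z
    unfolding G_def[abs_def] h_def
    by (intro DERIV_diff integral_indefinite_integral_has_real_derivative[OF int(1) that]
        integral_indefinite_integral_has_real_derivative[OF int(2) that])
  have G_ends: "G 0 = 0" "G 1 = 0"
    using integral_integral_density_at_1[OF mass(1) mean(1) cont(1)]
      integral_integral_density_at_1[OF mass(2) mean(2) cont(2)]
    by (simp_all add: G_def)
  show ?thesis
    using vanishing_ends_nonneg[OF G_cont G_ends G_deriv crossing x] by (simp add: G_def)
qed

lemma has_integral_quadratic_mult:
  fixes w :: "real \<Rightarrow> real"
  assumes "(w has_integral 1) S" "((\<lambda>t. t * w t) has_integral m) S"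
    "((\<lambda>t. t^2 * w t) has_integral s) S"
  shows "((\<lambda>t. (c0 + c1 * t + c2 * t^2) * w t) has_integral c0 + c1 * m + c2 * s) S"
proof -
  have "((\<lambda>t. c0 * w t + c1 * (t * w t) + c2 * (t^2 * w t)) has_integral c0 * 1 + c1 * m + c2 * s) S"
    by (intro has_integral_add has_integral_mult_right assms)
  then show ?thesis by (simp add: algebra_simps)
qed

lemma abs_le_add_square_div:
  fixes d e :: real
  assumes "0 < e"
  shows "\<bar>d\<bar> \<le> e + d^2 / (4 * e)"
proof -
  have "0 \<le> (\<bar>d\<bar> - 2 * e)^2" by simp
  then have "4 * e * \<bar>d\<bar> \<le> 4 * e * e + d^2" by (simp add: power2_eq_square algebra_simps)
  with assms show ?thesis by (simp add: field_simps)
qed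

lemma lower_partial_moment_bounds:
  fixes w :: "real \<Rightarrow> real"
  assumes nonneg: "\<And>t. t \<in> {0..1} \<Longrightarrow> 0 \<le> w t"
    and moments: "(w has_integral 1) {0..1}" "((\<lambda>t. t * w t) has_integral m) {0..1}"
      "((\<lambda>t. t^2 * w t) has_integral s) {0..1}"
    and J: "((\<lambda>t. max 0 (x - t) * w t) has_integral J) {0..1}"
    and x: "x \<in> {0..1}"
  shows "max 0 (x - m) \<le> J" "J \<le> x * (1 - m)" "x * (1 - m) - (m - s) \<le> J"
    "\<And>e. 0 < e \<Longrightarrow> J \<le> max 0 (x - m) + e + (s - m^2) / (4 * e)"
proof -
  note quadratic = has_integral_quadratic_mult[OF moments]
  have below: "c0 + c1 * m + c2 * s \<le> J"
    if "\<And>t. t \<in> {0..1} \<Longrightarrow> c0 + c1 * t + c2 * t^2 \<le> max 0 (x - t)" for c0 c1 c2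
    by (rule has_integral_le[OF quadratic J]) (use that nonneg in \<open>auto intro: mult_right_mono\<close>)
  have above: "J \<le> c0 + c1 * m + c2 * s"
    if "\<And>t. t \<in> {0..1} \<Longrightarrow> max 0 (x - t) \<le> c0 + c1 * t + c2 * t^2" for c0 c1 c2
    by (rule has_integral_le[OF J quadratic]) (use that nonneg in \<open>auto intro: mult_right_mono\<close>)
  have "0 \<le> J" using below[of 0 0 0] by simp
  moreover have "x - m \<le> J" using below[of x "-1" 0] by simp
  ultimately show "max 0 (x - m) \<le> J" by simp
  have "max 0 (x - t) \<le> x + (- x) * t + 0 * t^2" if "t \<in> {0..1}" for t
    using that x mult_left_le[of t x] mult_left_le_one_le[of t x] by (auto simp: max_def)
  from above[OF this] show "J \<le> x * (1 - m)" by (simp add: algebra_simps)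
  have "x + (- x - 1) * t + 1 * t^2 \<le> max 0 (x - t)" if "t \<in> {0..1}" for t
  proof -
    have "x + (- x - 1) * t + 1 * t^2 = (1 - t) * (x - t)" by (simp add: power2_eq_square algebra_simps)
    also have "\<dots> \<le> max 0 (x - t)" using that by (auto simp: max_def mult_left_le_one_le mult_nonneg_nonpos)
    finally show ?thesis .
  qed
  from below[OF this] show "x * (1 - m) - (m - s) \<le> J" by (simp add: algebra_simps)
  show "J \<le> max 0 (x - m) + e + (s - m^2) / (4 * e)" if e: "0 < e" for e
  proof -
    define K where "K = max 0 (x - m) + e"
    have "max 0 (x - t) \<le> (K + m^2 / (4 * e)) + (- 2 * m / (4 * e)) * t + (1 / (4 * e)) * t^2" for t
    proof -
      have "max 0 (x - t) \<le> max 0 (x - m) + \<bar>t - m\<bar>" by auto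
      also have "\<dots> \<le> K + (t - m)^2 / (4 * e)"
        using abs_le_add_square_div[OF e, of "t - m"] by (simp add: K_def)
      also have "\<dots> = (K + m^2 / (4 * e)) + (- 2 * m / (4 * e)) * t + (1 / (4 * e)) * t^2"
        using e by (simp add: field_simps power2_eq_square)
      finally show ?thesis .
    qed
    from above[OF this] have "J \<le> K + m^2 / (4 * e) + - 2 * m / (4 * e) * m + 1 / (4 * e) * s" .
    also have "\<dots> = max 0 (x - m) + e + (s - m^2) / (4 * e)"
      using e by (simp add: K_def field_simps power2_eq_square)
    finally show ?thesis .
  qed
qed

section \<open>Beta densities\<close>

definition beta_density :: "real \<Rightarrow> real \<Rightarrow> real \<Rightarrow> real" where
  "beta_density a b t = t powr (a - 1) * (1 - t) powr (b - 1) / Beta a b"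

lemma Beta_real_pos: "0 < a \<Longrightarrow> 0 < b \<Longrightarrow> 0 < Beta a (b::real)"
  unfolding Beta_def by simp

lemma Beta_plus1_left_real:
  fixes a b :: real
  assumes "0 < a" "0 < b"
  shows "Beta (a + 1) b = a / (a + b) * Beta a b"
proof -
  have "a \<notin> \<int>\<^sub>\<le>\<^sub>0" using assms by (auto elim!: nonpos_Ints_cases)
  from Beta_plus1_left[OF this, of b] assms show ?thesis by (simp add: field_simps)
qed

context
  fixes a b :: real
  assumes a: "0 < a" and b: "0 < b"
begin

lemma beta_density_nonneg: "0 \<le> beta_density a b t"
  using Beta_real_pos[OF a b] by (simp add: beta_density_def)

lemma beta_density_pos: "0 < t \<Longrightarrow> t < 1 \<Longrightarrow> 0 < beta_density a b t"
  using Beta_real_pos[OF a b] by (simp add: beta_density_def)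

lemma isCont_beta_density: "0 < t \<Longrightarrow> t < 1 \<Longrightarrow> isCont (beta_density a b) t"
  using Beta_real_pos[OF a b] unfolding beta_density_def by (intro continuous_intros) auto

lemma has_integral_power_beta_density:
  "((\<lambda>t. t ^ k * beta_density a b t) has_integral Beta (a + k) b / Beta a b) {0..1}"
proof -
  have "((\<lambda>t. t powr (a + k - 1) * (1 - t) powr (b - 1) / Beta a b) has_integral Beta (a + k) b / Beta a b) {0..1}"
    using has_integral_Beta_real[of "a + k" b] a b by (intro has_integral_divide) auto
  moreover have "t powr (a + k - 1) * (1 - t) powr (b - 1) / Beta a b = t ^ k * beta_density a b t"
    if "t \<in> {0..1}" for t
  proof (cases "t = 0")
    case False
    with that show ?thesis
      by (simp add: beta_density_def powr_add powr_diff powr_realpow)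
  qed (use a in \<open>cases k, auto simp: beta_density_def\<close>)
  ultimately show ?thesis by (rule has_integral_eq[rotated]) simp
qed

lemma beta_density_moments:
  "(beta_density a b has_integral 1) {0..1}"
  "((\<lambda>t. t * beta_density a b t) has_integral a / (a + b)) {0..1}"
  "((\<lambda>t. t^2 * beta_density a b t) has_integral a * (a + 1) / ((a + b) * (a + b + 1))) {0..1}"
proof -
  have B: "Beta a b \<noteq> 0" using Beta_real_pos[OF a b] by simp
  have B1: "Beta (a + 1) b = a / (a + b) * Beta a b"
    by (rule Beta_plus1_left_real[OF a b])
  have B2: "Beta (a + 2) b = (a + 1) / (a + b + 1) * (a / (a + b) * Beta a b)"
    using Beta_plus1_left_real[of "a + 1" b] a b B1 by (simp add: add.assoc add.commute)
  show "(beta_density a b has_integral 1) {0..1}"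
    using has_integral_power_beta_density[of 0] B by simp
  show "((\<lambda>t. t * beta_density a b t) has_integral a / (a + b)) {0..1}"
    using has_integral_power_beta_density[of 1] B B1 by simp
  show "((\<lambda>t. t^2 * beta_density a b t) has_integral a * (a + 1) / ((a + b) * (a + b + 1))) {0..1}"
    using has_integral_power_beta_density[of 2] B B2 by (simp add: mult.commute)
qed

lemma beta_cdf_eq_integral:
  assumes "x \<in> {0..1}"
  shows "beta_cdf a b x = integral {0..x} (beta_density a b)"
proof (cases "x = 1")
  case True
  then show ?thesis
    using integral_unique[OF beta_density_moments(1)] by (simp add: beta_cdf_def)
next
  case False
  with assms show ?thesis by (simp add: beta_cdf_def beta_density_def[abs_def])
qed

end

lemma convex_on_ln_combination:
  fixes c1 c2 c :: real
  assumes "c1 \<le> 0" "c2 \<le> 0"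
  shows "convex_on {0<..<1} (\<lambda>t. c1 * ln t + c2 * ln (1 - t) + c)"
proof (rule f''_ge0_imp_convex)
  show "((\<lambda>t. c1 * ln t + c2 * ln (1 - t) + c) has_real_derivative c1 / t - c2 / (1 - t)) (at t)"
    if "t \<in> {0<..<1}" for t
    using that by (auto intro!: derivative_eq_intros simp: field_simps)
  show "((\<lambda>t. c1 / t - c2 / (1 - t)) has_real_derivative - c1 / t^2 - c2 / (1 - t)^2) (at t)"
    if "t \<in> {0<..<1}" for t
    using that by (auto intro!: derivative_eq_intros simp: field_simps power2_eq_square)
  show "0 \<le> - c1 / t^2 - c2 / (1 - t)^2" for t
  proof -
    have "c1 / t^2 \<le> 0" "c2 / (1 - t)^2 \<le> 0"
      using assms by (simp_all add: divide_nonpos_nonneg)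
    then show ?thesis by linarith
  qed
qed simp

lemma beta_density_eq_exp_mult:
  assumes "0 < a1" "0 < b1" "0 < a2" "0 < b2" "0 < t" "t < 1"
  shows "beta_density a1 b1 t =
    exp ((a1 - a2) * ln t + (b1 - b2) * ln (1 - t) + (ln (Beta a2 b2) - ln (Beta a1 b1)))
      * beta_density a2 b2 t"
  using assms Beta_real_pos[of a1 b1] Beta_real_pos[of a2 b2]
  by (simp add: beta_density_def powr_def exp_add exp_diff field_simps)

lemma beta_density_diff_nonpos_between:
  assumes a1: "0 < a1" and b1: "0 < b1" and a12: "a1 \<le> a2" and b12: "b1 \<le> b2"
    and z: "0 < z0" "z0 < z" "z < z1" "z1 < 1"
    and neg: "beta_density a1 b1 z0 < beta_density a2 b2 z0"
      "beta_density a1 b1 z1 < beta_density a2 b2 z1"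
  shows "beta_density a1 b1 z \<le> beta_density a2 b2 z"
proof -
  have a2: "0 < a2" and b2: "0 < b2" using a1 b1 a12 b12 by linarith+
  define \<phi> where "\<phi> t = (a1 - a2) * ln t + (b1 - b2) * ln (1 - t) + (ln (Beta a2 b2) - ln (Beta a1 b1))"
    for t
  have neg_iff: "beta_density a1 b1 t < beta_density a2 b2 t \<longleftrightarrow> \<phi> t < 0" if "0 < t" "t < 1" for t
    using beta_density_eq_exp_mult[OF a1 b1 a2 b2 that] beta_density_pos[OF a2 b2 that]
    by (simp add: \<phi>_def)
  have "convex_on {z0..z1} \<phi>"
    unfolding \<phi>_def
    by (rule convex_on_subset[OF convex_on_ln_combination]) (use a12 b12 z in auto)
  then have "\<phi> z \<le> max (\<phi> z0) (\<phi> z1)"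
    by (rule convex_on_le_max) (use z in auto)
  also have "\<dots> < 0" using neg neg_iff z by auto
  finally have "\<phi> z < 0" .
  with neg_iff[of z] z show ?thesis by simp
qed

corollary integral_beta_cdf_le_of_same_mean:
  assumes a1: "0 < a1" and b1: "0 < b1" and a12: "a1 \<le> a2" and b12: "b1 \<le> b2"
    and mean: "a1 / (a1 + b1) = a2 / (a2 + b2)" and x: "x \<in> {0..1}"
  shows "integral {0..x} (beta_cdf a2 b2) \<le> integral {0..x} (beta_cdf a1 b1)"
proof -
  have a2: "0 < a2" and b2: "0 < b2" using a1 b1 a12 b12 by linarith+
  have "integral {0..x} (beta_cdf a b) = integral {0..x} (\<lambda>s. integral {0..s} (beta_density a b))"
    if "0 < a" "0 < b" for a b
    using x by (intro integral_cong) (auto simp: beta_cdf_eq_integral[OF that])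
  moreover have "integral {0..x} (\<lambda>s. integral {0..s} (beta_density a2 b2))
      \<le> integral {0..x} (\<lambda>s. integral {0..s} (beta_density a1 b1))"
  proof (rule integrated_cdf_le_of_density_crossing[OF beta_density_moments(1)[OF a1 b1]
        beta_density_moments(1)[OF a2 b2] beta_density_moments(2)[OF a1 b1] _ _ _ _ x])
    show "((\<lambda>t. t * beta_density a2 b2 t) has_integral a1 / (a1 + b1)) {0..1}"
      using beta_density_moments(2)[OF a2 b2] mean by simp
  qed (use isCont_beta_density[OF a1 b1] isCont_beta_density[OF a2 b2]
      beta_density_diff_nonpos_between[OF a1 b1 a12 b12] in blast)+
  ultimately show ?thesis using a1 b1 a2 b2 by simp
qed

section \<open>The family F_{M,V}\<close>

lemma D_pos: "0 < M \<Longrightarrow> M < 1 \<Longrightarrow> 0 < D M"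
  unfolding D_def by (simp add: power2_eq_square)

lemma beta_alpha_beta_eq:
  assumes "V \<noteq> 0"
  shows "beta_alpha M V = M * (D M / V - 1)" "beta_beta M V = (1 - M) * (D M / V - 1)"
  using assms unfolding beta_alpha_def beta_beta_def D_def by (simp_all add: field_simps)

context
  fixes M V :: real
  assumes M: "0 < M" "M < 1" and V: "0 < V" "V < D M"
begin

lemma FMV_beta_params:
  shows "0 < beta_alpha M V" "0 < beta_beta M V"
    "beta_alpha M V / (beta_alpha M V + beta_beta M V) = M"
    "beta_alpha M V * (beta_alpha M V + 1) /
       ((beta_alpha M V + beta_beta M V) * (beta_alpha M V + beta_beta M V + 1)) = M^2 + V"
proof -
  define s where "s = D M / V - 1"
  have s: "0 < s" using V by (simp add: s_def)
  have ab: "beta_alpha M V = M * s" "beta_beta M V = (1 - M) * s"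
    using beta_alpha_beta_eq V by (simp_all add: s_def)
  have D: "D M = V * (s + 1)" using V by (simp add: s_def)
  show "0 < beta_alpha M V" "0 < beta_beta M V" using ab s M by simp_all
  show "beta_alpha M V / (beta_alpha M V + beta_beta M V) = M"
    using s by (simp add: ab algebra_simps)
  have "M * s * (M * s + 1) / (s * (s + 1)) = M^2 + D M / (s + 1)"
  proof -
    have "s + 1 \<noteq> 0" using s by simp
    then have "M * (M * s + 1) / (s + 1) = M^2 + D M / (s + 1)"
      by (simp add: field_simps D_def power2_eq_square)
    with s show ?thesis by simp
  qed
  also have "D M / (s + 1) = V" using s by (simp add: D)
  moreover have "beta_alpha M V + beta_beta M V = s" by (simp add: ab algebra_simps)
  ultimately show "beta_alpha M V * (beta_alpha M V + 1) /
       ((beta_alpha M V + beta_beta M V) * (beta_alpha M V + beta_beta M V + 1)) = M^2 + V"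
    by (simp add: ab(1))
qed

end

lemma FMV_beta_params_antimono:
  assumes M: "0 < M" "M < 1" and V: "0 < V1" "V1 \<le> V2" "V2 < D M"
  shows "beta_alpha M V2 \<le> beta_alpha M V1" "beta_beta M V2 \<le> beta_beta M V1"
proof -
  have "D M / V2 \<le> D M / V1" using V by (intro divide_left_mono) auto
  then show "beta_alpha M V2 \<le> beta_alpha M V1" "beta_beta M V2 \<le> beta_beta M V1"
    using M V beta_alpha_beta_eq[of V1] beta_alpha_beta_eq[of V2] by (simp_all add: mult_left_mono)
qed

lemma FMV_eq_beta_cdf:
  "0 < V \<Longrightarrow> V < D M \<Longrightarrow> FMV M V = beta_cdf (beta_alpha M V) (beta_beta M V)"
  by (simp add: FMV_def fun_eq_iff)

definition integrated_FMV :: "real \<Rightarrow> real \<Rightarrow> real \<Rightarrow> real" where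
  "integrated_FMV M V x = integral {0..x} (FMV M V)"

lemma ssd_FMV_iff:
  "ssd (FMV M V1) (FMV M V2) \<longleftrightarrow> (\<forall>x\<in>{0..1}. integrated_FMV M V2 x \<le> integrated_FMV M V1 x)"
  by (simp add: ssd_def integrated_FMV_def)

lemma integrated_FMV_0:
  assumes "0 \<le> M" "x \<in> {0..1}"
  shows "integrated_FMV M 0 x = max 0 (x - M)"
proof -
  have FMV0: "FMV M 0 = (\<lambda>t. if t < M then 0 else 1)" by (simp add: FMV_def fun_eq_iff)
  have below: "((\<lambda>t. if t < M then 0 else 1::real) has_integral 0) {0..y}" if "y \<le> M" for y
    by (rule has_integral_spike_finite[where S = "{M}" and f = "\<lambda>t. 0"]) (use that in auto)
  show ?thesis
  proof (cases "x \<le> M")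
    case True
    then show ?thesis using below[OF True] by (simp add: integrated_FMV_def FMV0 integral_unique)
  next
    case False
    have "((\<lambda>t. 1::real) has_integral (x - M)) {M..x}"
      using has_integral_const_real[of "1::real" M x] False by simp
    then have "((\<lambda>t. if t < M then 0 else 1::real) has_integral (x - M)) {M..x}"
      by (rule has_integral_spike_finite[where S = "{}", rotated 2]) auto
    with below[of M] have "((\<lambda>t. if t < M then 0 else 1::real) has_integral (0 + (x - M))) {0..x}"
      by (intro has_integral_combine[where c = M]) (use assms False in auto)
    with False show ?thesis by (simp add: integrated_FMV_def FMV0 integral_unique)
  qed
qed

lemma integrated_FMV_D:
  assumes "0 < M" "M < 1" "x \<in> {0..1}"
  shows "integrated_FMV M (D M) x = x * (1 - M)"
proof -
  have "FMV M (D M) = (\<lambda>t. if t < 0 then 0 else if t < 1 then 1 - M else 1)"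
    using D_pos[OF assms(1,2)] by (simp add: FMV_def fun_eq_iff)
  moreover have "((\<lambda>t. 1 - M) has_integral x * (1 - M)) {0..x}"
    using has_integral_const_real[of "1 - M" 0 x] assms(3) by (simp add: mult.commute)
  then have "((\<lambda>t. if t < 0 then 0 else if t < 1 then 1 - M else 1) has_integral x * (1 - M)) {0..x}"
    by (rule has_integral_spike_finite[where S = "{1}", rotated 2]) (use assms in auto)
  ultimately show ?thesis by (simp add: integrated_FMV_def integral_unique)
qed

lemma integrated_FMV_bounds:
  assumes M: "0 < M" "M < 1" and V: "0 < V" "V < D M" and x: "x \<in> {0..1}"
  shows "max 0 (x - M) \<le> integrated_FMV M V x" "integrated_FMV M V x \<le> x * (1 - M)"
    "x * (1 - M) - (D M - V) \<le> integrated_FMV M V x"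
    "\<And>e. 0 < e \<Longrightarrow> integrated_FMV M V x \<le> max 0 (x - M) + e + V / (4 * e)"
proof -
  define a where "a = beta_alpha M V"
  define b where "b = beta_beta M V"
  note params = FMV_beta_params[OF M V, folded a_def b_def]
  have a: "0 < a" and b: "0 < b" using params by simp_all
  note moments = beta_density_moments[OF a b, unfolded params]
  have FMV: "FMV M V = beta_cdf a b" using FMV_eq_beta_cdf[OF V] by (simp add: a_def b_def)
  have "integrated_FMV M V x = integral {0..x} (\<lambda>s. integral {0..s} (beta_density a b))"
    unfolding integrated_FMV_def FMV using x
    by (intro integral_cong) (auto simp: beta_cdf_eq_integral[OF a b])
  then have J: "((\<lambda>t. max 0 (x - t) * beta_density a b t) has_integral integrated_FMV M V x) {0..1}"
    using has_integral_integrated_indefinite_integral[OF has_integral_integrable[OF moments(1)]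
        has_integral_integrable[OF moments(2)] isCont_beta_density[OF a b] x] by simp
  note bounds = lower_partial_moment_bounds[OF beta_density_nonneg[OF a b] moments J x]
  show "max 0 (x - M) \<le> integrated_FMV M V x" "integrated_FMV M V x \<le> x * (1 - M)"
    using bounds(1,2) .
  show "x * (1 - M) - (D M - V) \<le> integrated_FMV M V x"
    using bounds(3) by (simp add: D_def)
  show "integrated_FMV M V x \<le> max 0 (x - M) + e + V / (4 * e)" if "0 < e" for e
    using bounds(4)[OF that] by simp
qed

lemma integrated_FMV_mono:
  assumes M: "0 < M" "M < 1" and V: "0 \<le> V1" "V1 \<le> V2" "V2 \<le> D M" and x: "x \<in> {0..1}"
  shows "integrated_FMV M V1 x \<le> integrated_FMV M V2 x"
proof -
  have Dirac_le_Bernoulli: "max 0 (x - M) \<le> x * (1 - M)"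
  proof -
    have "x * M \<le> M" using M x by (intro mult_left_le_one_le) auto
    then have "x - M \<le> x * (1 - M)" by (simp add: algebra_simps)
    moreover have "0 \<le> x * (1 - M)" using M x by simp
    ultimately show ?thesis by simp
  qed
  consider "V1 = V2" | "V1 = 0" "V2 = D M" | "V1 = 0" "0 < V2" "V2 < D M"
    | "0 < V1" "V1 < D M" "V2 = D M" | "0 < V1" "V1 < V2" "V2 < D M"
    using V by fastforce
  then show ?thesis
  proof cases
    case 2
    then show ?thesis using integrated_FMV_0[of M x] integrated_FMV_D[OF M x] M x Dirac_le_Bernoulli
      by simp
  next
    case 3
    then show ?thesis using integrated_FMV_0[of M x] integrated_FMV_bounds(1)[OF M _ _ x] M x
      by simp
  next
    case 4
    then show ?thesis using integrated_FMV_D[OF M x] integrated_FMV_bounds(2)[OF M _ _ x] by simp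
  next
    case 5
    then have V1: "0 < V1" "V1 < D M" and V2: "0 < V2" "V2 < D M" by auto
    have "integral {0..x} (beta_cdf (beta_alpha M V1) (beta_beta M V1))
      \<le> integral {0..x} (beta_cdf (beta_alpha M V2) (beta_beta M V2))"
      using FMV_beta_params(3)[OF M V1] FMV_beta_params(3)[OF M V2]
      by (intro integral_beta_cdf_le_of_same_mean FMV_beta_params(1,2)[OF M V2]
          FMV_beta_params_antimono[OF M V1(1)] x) (use 5 in auto)
    then show ?thesis
      using V1 V2 by (simp add: integrated_FMV_def FMV_eq_beta_cdf)
  qed simp
qed

lemma ssd_FMV_antimono:
  assumes "0 < M" "M < 1" "0 \<le> V1" "V1 \<le> V2" "V2 \<le> D M"
  shows "ssd (FMV M V2) (FMV M V1)"
  using integrated_FMV_mono[OF assms] by (simp add: ssd_FMV_iff)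

lemma integrated_FMV_tendsto_0:
  assumes M: "0 < M" "M < 1" and x: "x \<in> {0..1}"
  shows "((\<lambda>V. integrated_FMV M V x) \<longlongrightarrow> integrated_FMV M 0 x) (at_right 0)"
proof (rule tendsto_sandwich)
  have close: "eventually (\<lambda>V. 0 < V \<and> V < D M) (at_right 0)"
    using eventually_at_right_real[OF D_pos[OF M]] by simp
  show "eventually (\<lambda>V. max 0 (x - M) \<le> integrated_FMV M V x) (at_right 0)"
    using close by eventually_elim (use integrated_FMV_bounds(1)[OF M _ _ x] in auto)
  show "eventually (\<lambda>V. integrated_FMV M V x \<le> max 0 (x - M) + sqrt V + sqrt V / 4) (at_right 0)"
    using close
  proof eventually_elim
    case (elim V)
    then have "integrated_FMV M V x \<le> max 0 (x - M) + sqrt V + V / (4 * sqrt V)"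
      using integrated_FMV_bounds(4)[OF M _ _ x, of V "sqrt V"] by simp
    also have "V / (4 * sqrt V) = sqrt V / 4"
      using real_div_sqrt[of V] elim by simp
    finally show ?case .
  qed
  show "((\<lambda>V. max 0 (x - M)) \<longlongrightarrow> integrated_FMV M 0 x) (at_right 0)"
    using integrated_FMV_0[of M x] M x by simp
  have "integrated_FMV M 0 x = max 0 (x - M) + sqrt 0 + sqrt 0 / 4"
    using integrated_FMV_0[of M x] M x by simp
  then show "((\<lambda>V. max 0 (x - M) + sqrt V + sqrt V / 4) \<longlongrightarrow> integrated_FMV M 0 x) (at_right 0)"
    unfolding \<open>integrated_FMV M 0 x = _\<close> by (intro tendsto_intros) simp_all
qed

lemma integrated_FMV_tendsto_D:
  assumes M: "0 < M" "M < 1" and x: "x \<in> {0..1}"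
  shows "((\<lambda>V. integrated_FMV M V x) \<longlongrightarrow> integrated_FMV M (D M) x) (at_left (D M))"
proof (rule tendsto_sandwich)
  have close: "eventually (\<lambda>V. 0 < V \<and> V < D M) (at_left (D M))"
    using eventually_at_left_real[OF D_pos[OF M]] by simp
  show "eventually (\<lambda>V. x * (1 - M) - (D M - V) \<le> integrated_FMV M V x) (at_left (D M))"
    using close by eventually_elim (use integrated_FMV_bounds(3)[OF M _ _ x] in auto)
  show "eventually (\<lambda>V. integrated_FMV M V x \<le> x * (1 - M)) (at_left (D M))"
    using close by eventually_elim (use integrated_FMV_bounds(2)[OF M _ _ x] in auto)
  have "((\<lambda>V. x * (1 - M) - (D M - V)) \<longlongrightarrow> x * (1 - M) - (D M - D M)) (at_left (D M))"
    by (intro tendsto_intros)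
  then show "((\<lambda>V. x * (1 - M) - (D M - V)) \<longlongrightarrow> integrated_FMV M (D M) x) (at_left (D M))"
    using integrated_FMV_D[OF M x] by simp
  show "((\<lambda>V. x * (1 - M)) \<longlongrightarrow> integrated_FMV M (D M) x) (at_left (D M))"
    using integrated_FMV_D[OF M x] by simp
qed

lemma ssd_sup_FMV_0:
  assumes M: "0 < M" "M < 1"
  shows "ssd_sup {FMV M V | V. 0 < V \<and> V < D M} (FMV M 0)"
  unfolding ssd_sup_def
proof (intro conjI allI impI ballI)
  fix F assume "F \<in> {FMV M V | V. 0 < V \<and> V < D M}"
  then show "ssd F (FMV M 0)"
    using ssd_FMV_antimono[OF M order_refl] by auto
next
  fix H assume H: "\<forall>F\<in>{FMV M V | V. 0 < V \<and> V < D M}. ssd F H"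
  show "ssd (FMV M 0) H"
    unfolding ssd_def
  proof
    fix x :: real assume x: "x \<in> {0..1}"
    have "eventually (\<lambda>V. integral {0..x} H \<le> integrated_FMV M V x) (at_right 0)"
      using eventually_at_right_real[OF D_pos[OF M]]
      by eventually_elim (use H x in \<open>auto simp: ssd_def integrated_FMV_def\<close>)
    then have "integral {0..x} H \<le> integrated_FMV M 0 x"
      by (rule tendsto_lowerbound[OF integrated_FMV_tendsto_0[OF M x]]) simp
    then show "integral {0..x} H \<le> integral {0..x} (FMV M 0)"
      by (simp add: integrated_FMV_def)
  qed
qed

lemma ssd_inf_FMV_D:
  assumes M: "0 < M" "M < 1"
  shows "ssd_inf {FMV M V | V. 0 < V \<and> V < D M} (FMV M (D M))"
  unfolding ssd_inf_def
proof (intro conjI allI impI ballI)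
  fix F assume "F \<in> {FMV M V | V. 0 < V \<and> V < D M}"
  then show "ssd (FMV M (D M)) F"
    using ssd_FMV_antimono[OF M _ _ order_refl] by auto
next
  fix H assume H: "\<forall>F\<in>{FMV M V | V. 0 < V \<and> V < D M}. ssd H F"
  show "ssd H (FMV M (D M))"
    unfolding ssd_def
  proof
    fix x :: real assume x: "x \<in> {0..1}"
    have "eventually (\<lambda>V. integrated_FMV M V x \<le> integral {0..x} H) (at_left (D M))"
      using eventually_at_left_real[OF D_pos[OF M]]
      by eventually_elim (use H x in \<open>auto simp: ssd_def integrated_FMV_def\<close>)
    then have "integrated_FMV M (D M) x \<le> integral {0..x} H"
      by (rule tendsto_upperbound[OF integrated_FMV_tendsto_D[OF M x]]) simp
    then show "integral {0..x} (FMV M (D M)) \<le> integral {0..x} H"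
      by (simp add: integrated_FMV_def)
  qed
qed

theorem corollary5:
  fixes M :: real
  assumes "0 < M" and "M < 1"
  shows "(\<forall>V1\<in>{0..D M}. \<forall>V2\<in>{0..D M}. ssd (FMV M V1) (FMV M V2) \<or> ssd (FMV M V2) (FMV M V1))
    \<and> (\<forall>V\<in>{0..D M}. ssd (FMV M V) (FMV M 0))
    \<and> (\<forall>V\<in>{0..D M}. ssd (FMV M (D M)) (FMV M V))
    \<and> (\<forall>V1 V2. 0 < V1 \<and> V1 < V2 \<and> V2 < D M \<longrightarrow>
          ssd (FMV M (D M)) (FMV M V2) \<and> ssd (FMV M V2) (FMV M V1) \<and> ssd (FMV M V1) (FMV M 0))
    \<and> ssd_sup {FMV M V | V. 0 < V \<and> V < D M} (FMV M 0)
    \<and> ssd_inf {FMV M V | V. 0 < V \<and> V < D M} (FMV M (D M))"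
proof -
  note antimono = ssd_FMV_antimono[OF assms]
  have total: "ssd (FMV M V1) (FMV M V2) \<or> ssd (FMV M V2) (FMV M V1)"
    if "V1 \<in> {0..D M}" "V2 \<in> {0..D M}" for V1 V2
    using that antimono[of V1 V2] antimono[of V2 V1] by (cases "V1 \<le> V2") auto
  show ?thesis
    using total ssd_sup_FMV_0[OF assms] ssd_inf_FMV_D[OF assms] D_pos[OF assms]
    by (auto intro!: antimono)
qed

end
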